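(* Let $G$ be a connected bipartite graph with color classes $E$ and $V$, let $\mathbf f$ be a hypertree of $(V,E)$ and $\Gamma$ a spanning tree of $G$ realizing $\mathbf f$. Let $E'\subset E$ be tight at $\mathbf f$. Then each part of the partition of $E'$ induced by the connected components of $\Gamma|_{E'}$ is itself tight at $\mathbf f$.
   Context: A hypertree of $(V,E)$ is a function $\mathbf f\colon E\to\mathbf N$ such that some spanning tree $\Gamma$ of $G$ has degree $\mathbf f(e)+1$ at every $e\in E$; such $\Gamma$ realizes $\mathbf f$. For a subgraph $H$ of $G$ and $E'\subset E$, $H|_{E'}$ is the graph formed by $E'$, all edges of $H$ adjacent to elements of $E'$, and their endpoints in $V$. Let $c(E')$ be the number of connected components of $G|_{E'}$ and $\bigcup E'$ the set of vertices of $V$ in $G|_{E'}$; set $\mu(\varnothing)=0$ and $\mu(E')=|\bigcup E'|-c(E')$ otherwise. A set $E'\subset E$ is tight at $\mathbf f$ if $\sum_{e\in E'}\mathbf f(e)=\mu(E')$. The components of $\Gamma|_{E'}$ partition $E'$. *)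

theory Defs
  imports Main
begin

text \<open>A bipartite graph with colour classes E (type 'e) and V (type 'v) is given by
  a set of edges G, a subset of E \<times> V. Vertices are Inl e / Inr v.
  Subgraphs (e.g. spanning trees) are subsets of the edge set with the same vertex set.\<close>

definition adj :: "('e \<times> 'v) set \<Rightarrow> ('e + 'v) \<Rightarrow> ('e + 'v) \<Rightarrow> bool" where
  "adj H x y \<longleftrightarrow> (\<exists>e v. (e, v) \<in> H \<and> ((x = Inl e \<and> y = Inr v) \<or> (x = Inr v \<and> y = Inl e)))"

definition reach :: "('e \<times> 'v) set \<Rightarrow> ('e + 'v) \<Rightarrow> ('e + 'v) \<Rightarrow> bool" where
  "reach H x y \<longleftrightarrow> (x, y) \<in> {(a, b). adj H a b}\<^sup>*"

definition verts :: "'e set \<Rightarrow> 'v set \<Rightarrow> ('e + 'v) set" where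
  "verts E V = Inl ` E \<union> Inr ` V"

definition bipartite_graph :: "'e set \<Rightarrow> 'v set \<Rightarrow> ('e \<times> 'v) set \<Rightarrow> bool" where
  "bipartite_graph E V G \<longleftrightarrow> finite E \<and> finite V \<and> G \<subseteq> E \<times> V"

definition connected_graph :: "'e set \<Rightarrow> 'v set \<Rightarrow> ('e \<times> 'v) set \<Rightarrow> bool" where
  "connected_graph E V H \<longleftrightarrow> (\<forall>x\<in>verts E V. \<forall>y\<in>verts E V. reach H x y)"

definition acyclic_graph :: "('e \<times> 'v) set \<Rightarrow> bool" where
  "acyclic_graph H \<longleftrightarrow> (\<forall>(e, v)\<in>H. \<not> reach (H - {(e, v)}) (Inl e) (Inr v))"

definition spanning_tree :: "'e set \<Rightarrow> 'v set \<Rightarrow> ('e \<times> 'v) set \<Rightarrow> ('e \<times> 'v) set \<Rightarrow> bool" where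
  "spanning_tree E V G T \<longleftrightarrow> T \<subseteq> G \<and> connected_graph E V T \<and> acyclic_graph T"

definition deg :: "('e \<times> 'v) set \<Rightarrow> 'e \<Rightarrow> nat" where
  "deg H e = card {v. (e, v) \<in> H}"

definition realizes :: "'e set \<Rightarrow> 'v set \<Rightarrow> ('e \<times> 'v) set \<Rightarrow> ('e \<times> 'v) set \<Rightarrow> ('e \<Rightarrow> nat) \<Rightarrow> bool" where
  "realizes E V G T f \<longleftrightarrow> spanning_tree E V G T \<and> (\<forall>e\<in>E. deg T e = f e + 1)"

definition hypertree :: "'e set \<Rightarrow> 'v set \<Rightarrow> ('e \<times> 'v) set \<Rightarrow> ('e \<Rightarrow> nat) \<Rightarrow> bool" where
  "hypertree E V G f \<longleftrightarrow> (\<exists>T. realizes E V G T f)"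

text \<open>H|_{E'}: edges of H adjacent to E', vertices E' and their endpoints.\<close>
definition restr_edges :: "('e \<times> 'v) set \<Rightarrow> 'e set \<Rightarrow> ('e \<times> 'v) set" where
  "restr_edges H E' = {(e, v) \<in> H. e \<in> E'}"

definition union_set :: "('e \<times> 'v) set \<Rightarrow> 'e set \<Rightarrow> 'v set" where
  "union_set H E' = {v. \<exists>e\<in>E'. (e, v) \<in> H}"

definition restr_verts :: "('e \<times> 'v) set \<Rightarrow> 'e set \<Rightarrow> ('e + 'v) set" where
  "restr_verts H E' = Inl ` E' \<union> Inr ` union_set H E'"

definition components :: "('e \<times> 'v) set \<Rightarrow> 'e set \<Rightarrow> ('e + 'v) set set" where
  "components H E' =
     (\<lambda>x. {y \<in> restr_verts H E'. reach (restr_edges H E') x y}) ` restr_verts H E'"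

definition mu :: "('e \<times> 'v) set \<Rightarrow> 'e set \<Rightarrow> int" where
  "mu G E' = (if E' = {} then 0
              else int (card (union_set G E')) - int (card (components G E')))"

definition tight :: "('e \<times> 'v) set \<Rightarrow> ('e \<Rightarrow> nat) \<Rightarrow> 'e set \<Rightarrow> bool" where
  "tight G f E' \<longleftrightarrow> (\<Sum>e\<in>E'. int (f e)) = mu G E'"

end

theory Submission
  imports Defs
begin

text \<open>Let \<open>F = \<Gamma>|\<^sub>E'\<close>, \<open>H = G|\<^sub>E'\<close> and let \<open>W\<close> be the vertex set of \<open>H\<close>.
  Since \<open>\<Gamma>\<close> has degree \<open>f e + 1\<close> at each \<open>e\<close>, tightness of \<open>E'\<close> says \<open>|F| + c(H) = |W|\<close>.
  Every forest in \<open>W\<close> satisfies \<open>|F| + c(F) \<le> |W|\<close>, and \<open>c(H) \<le> c(F)\<close> because \<open>F \<subseteq> H\<close>;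
  so both are equalities: \<open>F\<close> has the same components as \<open>H\<close>, and as a component \<open>K\<close> of a
  forest carries at most \<open>|K| - 1\<close> edges, each carries exactly that many.
  For a component \<open>C\<close> with edge-class part \<open>E\<^sub>C\<close>, all \<open>G\<close>-neighbours of \<open>E\<^sub>C\<close> lie in \<open>C\<close>
  and \<open>G|\<^sub>E\<^sub>C\<close> is connected, so the same count expresses tightness of \<open>E\<^sub>C\<close>.\<close>

lemma reach_refl [simp]: "reach H x x"
  by (simp add: reach_def)

lemma reach_trans: "reach H x y \<Longrightarrow> reach H y z \<Longrightarrow> reach H x z"
  unfolding reach_def by (rule rtrancl_trans)

lemma reach_sym: "reach H x y \<Longrightarrow> reach H y x"
proof -
  have "sym {(a, b). adj H a b}" by (auto simp: sym_def adj_def)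
  then show "reach H x y \<Longrightarrow> reach H y x"
    unfolding reach_def by (metis sym_rtrancl symD)
qed

lemma reach_mono:
  assumes "H \<subseteq> H'" "reach H x y"
  shows "reach H' x y"
proof -
  have "{(a, b). adj H a b} \<subseteq> {(a, b). adj H' a b}" using assms(1) by (auto simp: adj_def)
  then show ?thesis using assms(2) unfolding reach_def by (rule rtrancl_mono[THEN subsetD])
qed

lemma reach_edge: "(e, v) \<in> H \<Longrightarrow> reach H (Inl e) (Inr v)"
  unfolding reach_def by (rule r_into_rtrancl) (auto simp: adj_def)

lemma reach_induct [consumes 1, case_names refl step]:
  assumes "reach H x y" and "P x"
    and "\<And>y z. reach H x y \<Longrightarrow> P y \<Longrightarrow> adj H y z \<Longrightarrow> P z"
  shows "P y"
  using assms(1) unfolding reach_def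
  by (induction rule: rtrancl_induct) (use assms(2,3) in \<open>auto simp: reach_def\<close>)

definition edges_in :: "('e + 'v) set \<Rightarrow> ('e \<times> 'v) set \<Rightarrow> bool" where
  "edges_in W X \<longleftrightarrow> (\<forall>(e, v)\<in>X. Inl e \<in> W \<and> Inr v \<in> W)"

lemma reach_in:
  assumes "edges_in W X" "x \<in> W" "reach X x y"
  shows "y \<in> W"
  using assms(3,2) by (induction rule: reach_induct)
    (use assms(1) in \<open>auto simp: adj_def edges_in_def\<close>)

definition component_of :: "('e + 'v) set \<Rightarrow> ('e \<times> 'v) set \<Rightarrow> 'e + 'v \<Rightarrow> ('e + 'v) set" where
  "component_of W X x = {y \<in> W. reach X x y}"

definition components_in :: "('e + 'v) set \<Rightarrow> ('e \<times> 'v) set \<Rightarrow> ('e + 'v) set set" where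
  "components_in W X = component_of W X ` W"

lemma components_eq_components_in:
  "components H S = components_in (restr_verts H S) (restr_edges H S)"
  unfolding components_def components_in_def component_of_def ..

lemma component_of_self: "a \<in> W \<Longrightarrow> a \<in> component_of W X a"
  by (simp add: component_of_def)

lemma component_of_eq:
  assumes "reach X a b"
  shows "component_of W X a = component_of W X b"
proof -
  have "reach X a y \<longleftrightarrow> reach X b y" for y
    using assms reach_sym[OF assms] reach_trans by metis
  then show ?thesis by (simp add: component_of_def)
qed

lemma component_of_eq_iff:
  assumes "b \<in> W"
  shows "component_of W X a = component_of W X b \<longleftrightarrow> reach X a b"
proof
  assume "component_of W X a = component_of W X b"
  then have "b \<in> component_of W X a" using component_of_self[OF assms] by simp
  then show "reach X a b" by (simp add: component_of_def)
qed (rule component_of_eq)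

lemma finite_components_in: "finite W \<Longrightarrow> finite (components_in W X)"
  by (simp add: components_in_def)

lemma components_in_subset: "K \<in> components_in W X \<Longrightarrow> K \<subseteq> W"
  by (auto simp: components_in_def component_of_def)

lemma components_in_nonempty: "K \<in> components_in W X \<Longrightarrow> K \<noteq> {}"
  using component_of_self by (fastforce simp: components_in_def)

lemma components_in_reach: "K \<in> components_in W X \<Longrightarrow> x \<in> K \<Longrightarrow> y \<in> K \<Longrightarrow> reach X x y"
  unfolding components_in_def component_of_def using reach_sym reach_trans by blast

lemma components_in_closed:
  "K \<in> components_in W X \<Longrightarrow> x \<in> K \<Longrightarrow> y \<in> W \<Longrightarrow> reach X x y \<Longrightarrow> y \<in> K"
  unfolding components_in_def component_of_def using reach_trans by blast

lemma components_in_disjoint: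
  assumes "K \<in> components_in W X" "K' \<in> components_in W X" "K \<noteq> K'"
  shows "K \<inter> K' = {}"
proof -
  obtain a b where ab: "K = component_of W X a" "K' = component_of W X b"
    using assms(1,2) by (auto simp: components_in_def)
  show ?thesis
  proof (rule ccontr)
    assume "K \<inter> K' \<noteq> {}"
    then obtain y where "reach X a y" "reach X b y" using ab by (auto simp: component_of_def)
    then have "reach X a b" by (metis reach_sym reach_trans)
    then show False using component_of_eq assms(3) ab by metis
  qed
qed

lemma Union_components_in: "\<Union>(components_in W X) = W"
proof
  show "\<Union>(components_in W X) \<subseteq> W" using components_in_subset by blast
  show "W \<subseteq> \<Union>(components_in W X)"
    using component_of_self by (auto simp: components_in_def)
qed

lemma components_in_eq_singleton_iff:
  "components_in W X = {W} \<longleftrightarrow> W \<noteq> {} \<and> (\<forall>x\<in>W. \<forall>y\<in>W. reach X x y)"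
proof
  assume "components_in W X = {W}"
  then have "W \<in> components_in W X" by simp
  then show "W \<noteq> {} \<and> (\<forall>x\<in>W. \<forall>y\<in>W. reach X x y)"
    using components_in_nonempty components_in_reach by metis
next
  assume W: "W \<noteq> {} \<and> (\<forall>x\<in>W. \<forall>y\<in>W. reach X x y)"
  then have "component_of W X x = W" if "x \<in> W" for x
    using that by (auto simp: component_of_def)
  then show "components_in W X = {W}"
    using W unfolding components_in_def by auto
qed

lemma components_in_mono_vertices:
  assumes "edges_in W' X" "W' \<subseteq> W"
  shows "components_in W' X \<subseteq> components_in W X"
proof
  fix K assume "K \<in> components_in W' X"
  then obtain a where a: "a \<in> W'" "K = component_of W' X a" by (auto simp: components_in_def)
  then have "K = component_of W X a"
    using reach_in[OF assms(1) a(1)] assms(2) by (auto simp: component_of_def)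
  then show "K \<in> components_in W X" using a assms(2) by (auto simp: components_in_def)
qed

lemma coarsen_component_of:
  assumes "X \<subseteq> Y" "a \<in> W"
  shows "{y \<in> W. \<exists>b\<in>component_of W X a. reach Y b y} = component_of W Y a"
proof (intro equalityI subsetI)
  fix y assume "y \<in> {y \<in> W. \<exists>b\<in>component_of W X a. reach Y b y}"
  then obtain b where "y \<in> W" "reach X a b" "reach Y b y" by (auto simp: component_of_def)
  then show "y \<in> component_of W Y a"
    using reach_mono[OF assms(1)] reach_trans by (metis (mono_tags) component_of_def mem_Collect_eq)
next
  fix y assume "y \<in> component_of W Y a"
  then show "y \<in> {y \<in> W. \<exists>b\<in>component_of W X a. reach Y b y}"
    using component_of_self[OF assms(2), of X] by (auto simp: component_of_def)
qed

lemma components_in_coarsen: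
  assumes "X \<subseteq> Y"
  shows "(\<lambda>K. {y \<in> W. \<exists>b\<in>K. reach Y b y}) ` components_in W X = components_in W Y"
  unfolding components_in_def image_image using coarsen_component_of[OF assms]
  by (auto intro!: image_cong)

lemma card_components_in_antimono:
  assumes "finite W" "X \<subseteq> Y"
  shows "card (components_in W Y) \<le> card (components_in W X)"
proof -
  let ?merge = "\<lambda>K. {y \<in> W. \<exists>b\<in>K. reach Y b y}"
  have "card (?merge ` components_in W X) \<le> card (components_in W X)"
    using finite_components_in[OF assms(1)] by (rule card_image_le)
  then show ?thesis by (simp only: components_in_coarsen[OF assms(2)])
qed

lemma reach_if_card_components_in_eq:
  assumes "finite W" "X \<subseteq> Y" "card (components_in W Y) = card (components_in W X)"
    and "x \<in> W" "y \<in> W" "reach Y x y"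
  shows "reach X x y"
proof -
  let ?merge = "\<lambda>K. {y \<in> W. \<exists>b\<in>K. reach Y b y}"
  have "inj_on ?merge (components_in W X)"
    unfolding inj_on_iff_eq_card[OF finite_components_in[OF assms(1)]]
    by (simp only: components_in_coarsen[OF assms(2)] assms(3))
  moreover have "?merge (component_of W X x) = ?merge (component_of W X y)"
    by (simp only: coarsen_component_of[OF assms(2) assms(4)] coarsen_component_of[OF assms(2) assms(5)]
        component_of_eq[OF assms(6)])
  moreover have "component_of W X x \<in> components_in W X" "component_of W X y \<in> components_in W X"
    using assms(4,5) by (auto simp: components_in_def)
  ultimately have "component_of W X x = component_of W X y" by (meson inj_onD)
  then show ?thesis using component_of_eq_iff[OF assms(5)] by blast
qed

lemma acyclic_graph_mono:
  assumes "acyclic_graph Y" "X \<subseteq> Y"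
  shows "acyclic_graph X"
  unfolding acyclic_graph_def
proof (intro ballI, clarify)
  fix e v assume "(e, v) \<in> X" "reach (X - {(e, v)}) (Inl e) (Inr v)"
  moreover have "X - {(e, v)} \<subseteq> Y - {(e, v)}" using assms(2) by blast
  ultimately have "(e, v) \<in> Y" "reach (Y - {(e, v)}) (Inl e) (Inr v)"
    using assms(2) reach_mono by blast+
  then show False using assms(1) unfolding acyclic_graph_def by blast
qed

text \<open>Each edge of a forest joins two different components of the remaining edges.\<close>

lemma forest_card_le:
  assumes "finite X" "finite W" "edges_in W X" "acyclic_graph X"
  shows "card X + card (components_in W X) \<le> card W"
  using assms
proof (induction X rule: finite_induct)
  case empty
  then show ?case unfolding components_in_def using card_image_le by auto
next
  case (insert x X)
  obtain e v where x: "x = (e, v)" by (cases x)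
  have "acyclic_graph X" using insert.prems(3) by (rule acyclic_graph_mono) auto
  moreover have "edges_in W X" using insert.prems(2) by (simp add: edges_in_def)
  ultimately have IH: "card X + card (components_in W X) \<le> card W"
    using insert.IH insert.prems(1) by blast
  have ends: "Inl e \<in> W" "Inr v \<in> W" using insert.prems(2) x by (auto simp: edges_in_def)
  have "\<not> reach X (Inl e) (Inr v)"
    using insert.prems(3) insert.hyps(2) x unfolding acyclic_graph_def by auto
  moreover have "reach (insert x X) (Inl e) (Inr v)" using x by (auto intro: reach_edge)
  ultimately have "card (components_in W (insert x X)) \<noteq> card (components_in W X)"
    using reach_if_card_components_in_eq[OF insert.prems(1) _ _ ends] by blast
  moreover have "card (components_in W (insert x X)) \<le> card (components_in W X)"
    using card_components_in_antimono[OF insert.prems(1)] by blast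
  ultimately show ?case using IH insert.hyps by simp
qed

lemma restr_edges_subset: "restr_edges X S \<subseteq> X"
  by (auto simp: restr_edges_def)

lemma reach_within_component:
  assumes "edges_in W X" "K \<in> components_in W X" "x \<in> K" "reach X x y"
  shows "reach (restr_edges X {e. Inl e \<in> K}) x y"
proof -
  let ?XK = "restr_edges X {e. Inl e \<in> K}"
  have "y \<in> K \<and> reach ?XK x y"
    using assms(4)
  proof (induction rule: reach_induct)
    case refl
    then show ?case using assms(3) by simp
  next
    case (step y z)
    then obtain e v where ev: "(e, v) \<in> X" "y = Inl e \<and> z = Inr v \<or> y = Inr v \<and> z = Inl e"
      by (auto simp: adj_def)
    have "z \<in> W" using ev assms(1) by (auto simp: edges_in_def)
    moreover have "reach X y z" using ev by (auto intro: reach_edge reach_sym)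
    ultimately have "z \<in> K" using components_in_closed[OF assms(2)] step.IH by blast
    then have "(e, v) \<in> ?XK" using ev step.IH by (auto simp: restr_edges_def)
    then have "reach ?XK y z" using ev by (auto intro: reach_edge reach_sym)
    then show ?case using \<open>z \<in> K\<close> step.IH reach_trans by blast
  qed
  then show ?thesis ..
qed

lemma edges_in_component:
  assumes "edges_in W X" "K \<in> components_in W X"
  shows "edges_in K (restr_edges X {e. Inl e \<in> K})"
  unfolding edges_in_def restr_edges_def
proof clarsimp
  fix e v assume ev: "(e, v) \<in> X" and "Inl e \<in> K"
  moreover have "Inr v \<in> W" using assms(1) ev by (auto simp: edges_in_def)
  ultimately show "Inr v \<in> K" using components_in_closed[OF assms(2)] reach_edge[OF ev] by blast
qed

lemma components_in_component:
  assumes "edges_in W X" "K \<in> components_in W X"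
  shows "components_in K (restr_edges X {e. Inl e \<in> K}) = {K}"
  unfolding components_in_eq_singleton_iff
  using components_in_nonempty[OF assms(2)] components_in_reach[OF assms(2)]
    reach_within_component[OF assms] by blast

lemma forest_component_card_le:
  assumes "finite W" "finite X" "edges_in W X" "acyclic_graph X" "K \<in> components_in W X"
  shows "card (restr_edges X {e. Inl e \<in> K}) + 1 \<le> card K"
proof -
  let ?XK = "restr_edges X {e. Inl e \<in> K}"
  have "finite ?XK" using assms(2) by (rule finite_subset[OF restr_edges_subset])
  moreover have "finite K" using components_in_subset[OF assms(5)] assms(1) by (rule finite_subset)
  moreover have "acyclic_graph ?XK" using assms(4) by (rule acyclic_graph_mono) (auto simp: restr_edges_def)
  ultimately show ?thesis
    using forest_card_le[of ?XK K] edges_in_component[OF assms(3,5)]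
      components_in_component[OF assms(3,5)] by simp
qed

lemma sum_card_components_in:
  assumes "finite W"
  shows "(\<Sum>K\<in>components_in W X. card K) = card W"
proof -
  have "card (\<Union>(components_in W X)) = (\<Sum>K\<in>components_in W X. card K)"
  proof (rule card_Union_disjoint)
    show "pairwise disjnt (components_in W X)"
      by (rule pairwiseI) (simp add: disjnt_def components_in_disjoint)
    show "\<And>K. K \<in> components_in W X \<Longrightarrow> finite K"
      using finite_subset[OF components_in_subset assms] .
  qed
  then show ?thesis by (simp add: Union_components_in)
qed

lemma sum_card_component_edges:
  assumes "finite W" "finite X" "edges_in W X"
  shows "(\<Sum>K\<in>components_in W X. card (restr_edges X {e. Inl e \<in> K})) = card X"
proof -
  have "(\<Union>K\<in>components_in W X. restr_edges X {e. Inl e \<in> K}) = X"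
    using assms(3) Union_components_in[of W X] by (auto simp: edges_in_def restr_edges_def)
  moreover have "card (\<Union>K\<in>components_in W X. restr_edges X {e. Inl e \<in> K}) =
      (\<Sum>K\<in>components_in W X. card (restr_edges X {e. Inl e \<in> K}))"
  proof (rule card_UN_disjoint)
    show "finite (components_in W X)" using assms(1) by (rule finite_components_in)
    show "\<forall>K\<in>components_in W X. finite (restr_edges X {e. Inl e \<in> K})"
      using assms(2) finite_subset[OF restr_edges_subset] by blast
    show "\<forall>K\<in>components_in W X. \<forall>K'\<in>components_in W X. K \<noteq> K' \<longrightarrow>
        restr_edges X {e. Inl e \<in> K} \<inter> restr_edges X {e. Inl e \<in> K'} = {}"
      using components_in_disjoint by (fastforce simp: restr_edges_def)
  qed
  ultimately show ?thesis by simp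
qed

lemma components_in_eq_singleton_mono:
  "components_in W X = {W} \<Longrightarrow> X \<subseteq> Y \<Longrightarrow> components_in W Y = {W}"
  unfolding components_in_eq_singleton_iff using reach_mono by blast

lemma forest_component_card_eq:
  assumes "finite W" "finite X" "edges_in W X" "acyclic_graph X"
    and "card X + card (components_in W X) = card W" "K \<in> components_in W X"
  shows "card (restr_edges X {e. Inl e \<in> K}) + 1 = card K"
proof (rule sum_mono_inv[where f = "\<lambda>K. card (restr_edges X {e. Inl e \<in> K}) + 1" and g = card])
  show "(\<Sum>K\<in>components_in W X. card (restr_edges X {e. Inl e \<in> K}) + 1) =
      (\<Sum>K\<in>components_in W X. card K)"
    unfolding sum.distrib sum_card_component_edges[OF assms(1-3)] sum_card_components_in[OF assms(1)]
    using assms(5) by simp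
  show "\<And>K. K \<in> components_in W X \<Longrightarrow> card (restr_edges X {e. Inl e \<in> K}) + 1 \<le> card K"
    using forest_component_card_le[OF assms(1-4)] .
  show "K \<in> components_in W X" by (rule assms(6))
  show "finite (components_in W X)" using assms(1) by (rule finite_components_in)
qed

lemma forest_spans_if_card_ge:
  assumes "finite W" "finite X" "edges_in W X" "acyclic_graph X"
    and "X \<subseteq> Y" "card W \<le> card X + card (components_in W Y)"
  shows "card X + card (components_in W X) = card W"
    and "x \<in> W \<Longrightarrow> y \<in> W \<Longrightarrow> reach Y x y \<Longrightarrow> reach X x y"
proof -
  have "card (components_in W Y) \<le> card (components_in W X)"
    using assms(1,5) by (rule card_components_in_antimono)
  moreover have "card X + card (components_in W X) \<le> card W"
    using assms(2,1,3,4) by (rule forest_card_le)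
  ultimately have eq: "card (components_in W Y) = card (components_in W X)" using assms(6) by linarith
  then show "card X + card (components_in W X) = card W" using assms(6) \<open>card X + _ \<le> _\<close> by linarith
  show "x \<in> W \<Longrightarrow> y \<in> W \<Longrightarrow> reach Y x y \<Longrightarrow> reach X x y"
    using reach_if_card_components_in_eq[OF assms(1,5) eq] .
qed

lemma card_restr_verts:
  assumes "finite S" "finite (union_set H S)"
  shows "card (restr_verts H S) = card S + card (union_set H S)"
  unfolding restr_verts_def using assms by (subst card_Un_disjoint) (auto simp: card_image)

lemma union_set_subset: "H \<subseteq> E \<times> V \<Longrightarrow> union_set H S \<subseteq> V"
  by (auto simp: union_set_def)

lemma card_restr_edges_realizes:
  assumes "bipartite_graph E V G" "realizes E V G \<Gamma> f" "S \<subseteq> E"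
  shows "card (restr_edges \<Gamma> S) = (\<Sum>e\<in>S. f e) + card S"
proof -
  have "finite S" "finite V" "\<Gamma> \<subseteq> E \<times> V"
    using assms finite_subset by (auto simp: bipartite_graph_def realizes_def spanning_tree_def)
  have "restr_edges \<Gamma> S = (SIGMA e:S. {v. (e, v) \<in> \<Gamma>})" by (auto simp: restr_edges_def)
  moreover have "finite {v. (e, v) \<in> \<Gamma>}" for e
    using \<open>\<Gamma> \<subseteq> E \<times> V\<close> by (auto intro: finite_subset[OF _ \<open>finite V\<close>])
  ultimately have "card (restr_edges \<Gamma> S) = (\<Sum>e\<in>S. deg \<Gamma> e)"
    using \<open>finite S\<close> by (simp add: deg_def)
  also have "\<dots> = (\<Sum>e\<in>S. f e + 1)"
    using assms(2,3) by (intro sum.cong) (auto simp: realizes_def)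
  also have "\<dots> = (\<Sum>e\<in>S. f e) + card S" by (simp only: sum.distrib) simp
  finally show ?thesis .
qed

lemma tight_iff_card:
  assumes "bipartite_graph E V G" "realizes E V G \<Gamma> f" "S \<subseteq> E" "S \<noteq> {}"
  shows "tight G f S \<longleftrightarrow>
    card (restr_edges \<Gamma> S) + card (components G S) = card (restr_verts G S)"
proof -
  have "finite S" "finite (union_set G S)"
    using assms(1,3) finite_subset[OF union_set_subset[of G E V S]] finite_subset
    by (auto simp: bipartite_graph_def)
  then show ?thesis
    using card_restr_edges_realizes[OF assms(1-3)] card_restr_verts[of S G] assms(4)
    by (simp add: tight_def mu_def flip: of_nat_sum) linarith
qed

lemma restr_verts_component:
  assumes K: "K \<in> components_in (restr_verts G S) F"
    and spans: "\<And>x y. x \<in> restr_verts G S \<Longrightarrow> y \<in> restr_verts G S \<Longrightarrow>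
      reach (restr_edges G S) x y \<Longrightarrow> reach F x y"
  shows "restr_verts G {e. Inl e \<in> K} = K"
proof -
  let ?W = "restr_verts G S"
  have edge: "reach F (Inl e) (Inr v)" if "e \<in> S" "(e, v) \<in> G" for e v
  proof (rule spans)
    show "Inl e \<in> ?W" "Inr v \<in> ?W" using that by (auto simp: restr_verts_def union_set_def)
    show "reach (restr_edges G S) (Inl e) (Inr v)"
      using that by (intro reach_edge) (simp add: restr_edges_def)
  qed
  have right: "Inr v \<in> K \<longleftrightarrow> (\<exists>e. Inl e \<in> K \<and> (e, v) \<in> G)" for v
  proof
    assume v: "Inr v \<in> K"
    then obtain e where e: "e \<in> S" "(e, v) \<in> G"
      using components_in_subset[OF K] by (auto simp: restr_verts_def union_set_def)
    then have "Inl e \<in> K"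
      using components_in_closed[OF K v] reach_sym[OF edge[OF e]] by (auto simp: restr_verts_def)
    then show "\<exists>e. Inl e \<in> K \<and> (e, v) \<in> G" using e by blast
  next
    assume "\<exists>e. Inl e \<in> K \<and> (e, v) \<in> G"
    then obtain e where e: "Inl e \<in> K" "(e, v) \<in> G" by blast
    then have "e \<in> S" using components_in_subset[OF K] by (auto simp: restr_verts_def)
    then show "Inr v \<in> K"
      using components_in_closed[OF K e(1)] edge e(2) by (auto simp: restr_verts_def union_set_def)
  qed
  show ?thesis
    unfolding restr_verts_def union_set_def
  proof (intro equalityI subsetI)
    fix z assume "z \<in> K"
    then show "z \<in> Inl ` {e. Inl e \<in> K} \<union> Inr ` {v. \<exists>e\<in>{e. Inl e \<in> K}. (e, v) \<in> G}"
      using right by (cases z) auto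
  qed (use right in auto)
qed

lemma restr_realizing_tree:
  assumes "bipartite_graph E V G" "realizes E V G \<Gamma> f" "S \<subseteq> E"
  shows "finite (restr_verts G S)" and "finite (restr_edges \<Gamma> S)"
    and "edges_in (restr_verts G S) (restr_edges \<Gamma> S)" and "acyclic_graph (restr_edges \<Gamma> S)"
    and "restr_edges \<Gamma> S \<subseteq> restr_edges G S"
    and "components \<Gamma> S \<subseteq> components_in (restr_verts G S) (restr_edges \<Gamma> S)"
proof -
  have graph: "finite E" "finite V" "G \<subseteq> E \<times> V" "\<Gamma> \<subseteq> G" "acyclic_graph \<Gamma>"
    using assms(1,2) by (auto simp: bipartite_graph_def realizes_def spanning_tree_def)
  show "finite (restr_verts G S)"
    using graph assms(3) finite_subset[OF union_set_subset[of G E V S]] finite_subset[of S E]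
    by (auto simp: restr_verts_def)
  show "finite (restr_edges \<Gamma> S)"
    using graph by (auto simp: restr_edges_def intro: finite_subset[of _ "E \<times> V"])
  show sub: "restr_edges \<Gamma> S \<subseteq> restr_edges G S" using graph(4) by (auto simp: restr_edges_def)
  then show "edges_in (restr_verts G S) (restr_edges \<Gamma> S)"
    by (auto simp: edges_in_def restr_verts_def restr_edges_def union_set_def)
  show "acyclic_graph (restr_edges \<Gamma> S)" using graph(5) restr_edges_subset by (rule acyclic_graph_mono)
  show "components \<Gamma> S \<subseteq> components_in (restr_verts G S) (restr_edges \<Gamma> S)"
    unfolding components_eq_components_in
    using graph(4) by (intro components_in_mono_vertices)
      (auto simp: edges_in_def restr_edges_def restr_verts_def union_set_def)
qed

lemma tight_component_of_spanning_forest: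
  assumes "bipartite_graph E V G" "realizes E V G \<Gamma> f" "S \<subseteq> E"
    and count: "card (restr_edges \<Gamma> S) + card (components_in (restr_verts G S) (restr_edges \<Gamma> S))
      = card (restr_verts G S)"
    and spans: "\<And>x y. x \<in> restr_verts G S \<Longrightarrow> y \<in> restr_verts G S \<Longrightarrow>
      reach (restr_edges G S) x y \<Longrightarrow> reach (restr_edges \<Gamma> S) x y"
    and C: "C \<in> components_in (restr_verts G S) (restr_edges \<Gamma> S)"
  shows "tight G f {e. Inl e \<in> C}"
proof -
  define EC where "EC = {e. Inl e \<in> C}"
  note forest = restr_realizing_tree[OF assms(1-3)]
  have "EC \<subseteq> S" using components_in_subset[OF C] by (auto simp: EC_def restr_verts_def)
  then have edges: "restr_edges (restr_edges \<Gamma> S) EC = restr_edges \<Gamma> EC"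
    by (auto simp: restr_edges_def)
  have "card (restr_edges (restr_edges \<Gamma> S) EC) + 1 = card C"
    unfolding EC_def using forest(1-4) count C by (rule forest_component_card_eq)
  then have tree: "card (restr_edges \<Gamma> EC) + 1 = card C" by (simp only: edges)
  have verts: "restr_verts G EC = C"
    unfolding EC_def using C spans by (rule restr_verts_component)
  have "components_in C (restr_edges (restr_edges \<Gamma> S) EC) = {C}"
    unfolding EC_def using forest(3) C by (rule components_in_component)
  moreover have "restr_edges \<Gamma> EC \<subseteq> restr_edges G EC"
    using assms(2) by (auto simp: realizes_def spanning_tree_def restr_edges_def)
  ultimately have comps: "components G EC = {C}"
    by (simp add: edges components_eq_components_in verts components_in_eq_singleton_mono)
  have "EC \<noteq> {}"
    using verts components_in_nonempty[OF C] by (auto simp: restr_verts_def union_set_def)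
  then show ?thesis
    using tight_iff_card[OF assms(1,2)] \<open>EC \<subseteq> S\<close> assms(3) tree verts comps by (simp add: EC_def)
qed

theorem lemma2p9:
  fixes E :: "'e set" and V :: "'v set" and G \<Gamma> :: "('e \<times> 'v) set" and f :: "'e \<Rightarrow> nat"
    and E' :: "'e set"
  assumes "bipartite_graph E V G"
    and "connected_graph E V G"
    and "hypertree E V G f"
    and "realizes E V G \<Gamma> f"
    and "E' \<subseteq> E"
    and "tight G f E'"
  shows "\<forall>C \<in> components \<Gamma> E'. tight G f {e. Inl e \<in> C}"
proof
  fix C assume C: "C \<in> components \<Gamma> E'"
  note forest = restr_realizing_tree[OF assms(1,4,5)]
  have "E' \<noteq> {}" using C by (auto simp: components_def restr_verts_def union_set_def)
  then have "card (restr_verts G E')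
      \<le> card (restr_edges \<Gamma> E') + card (components_in (restr_verts G E') (restr_edges G E'))"
    using assms(6) tight_iff_card[OF assms(1,4,5)] by (simp add: components_eq_components_in)
  note spanning = forest_spans_if_card_ge[OF forest(1-5) this]
  show "tight G f {e. Inl e \<in> C}"
    using assms(1,4,5) spanning C forest(6) by (blast intro: tight_component_of_spanning_forest)
qed

end
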